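(* Let $K$ be a totally real number field, $A$ a totally definite quaternion algebra over $K$, $\Lambda$ a maximal order of $A$, and let $\ell=\ell_1^2\ell_2$ where $\ell_1,\ell_2$ are positive integers and $\ell_2$ is square-free. If there exists an Arakelov-modular lattice of level $\ell_2$ over $\Lambda$, then there exists an Arakelov-modular lattice of level $\ell$ over $\Lambda$.
   Context: $A=\left(\frac{a,b}{K}\right)$ has $K$-basis $1,i,j,ij$, $i^2=a$, $j^2=b$, $ij=-ji$; conjugation $\overline{x_0+x_1i+x_2j+x_3ij}=x_0-x_1i-x_2j-x_3ij$; $\mathrm{tr}_{A/K}(x)=x+\bar x$; totally definite means $A\otimes_{K,\sigma}\mathbb{R}$ is the Hamilton quaternions for every real embedding $\sigma$. Ideals of $A$: finitely generated $\mathcal{O}_K$-submodules $I$ with $KI=A$; orders: ideals that are subrings with 1; maximal orders: maximal under inclusion. $\mathcal{LR}(\Lambda)$: ideals $J$ with $\{x:xJ\subseteq J\}=\{x:Jx\subseteq J\}=\Lambda$. $N(\Lambda)=\{x\in A^\times:x\Lambda x^{-1}=\Lambda\}$. For totally positive $\alpha\in K^\times$, $q_\alpha(x,y)=\mathrm{Tr}_{K/\mathbb{Q}}(\mathrm{tr}_{A/K}(\alpha x\bar y))$ extended to $A\otimes_{\mathbb{Q}}\mathbb{R}$. An ideal lattice over $\Lambda$ is $(I,q_\alpha)$ with $I=Jt$, $J\in\mathcal{LR}(\Lambda)$, $t\in A^\times$; dual $I^*=\{x\in A\otimes\mathbb{R}:q_\alpha(x,y)\in\mathbb{Z}\ \forall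 y\in I\}$. For a positive integer $m$, $(I,q_\alpha)$ is Arakelov-modular of level $m$ if there exist $J\in\mathcal{LR}(\Lambda)$, $t\in A^\times$ with $I=Jt$ and $\beta\in N(\Lambda)\cap\Lambda$ with $m=\beta\bar\beta$ and $I=I^*\bar t\beta\bar t^{-1}$. *)

theory Defs
  imports Complex_Main "HOL-Computational_Algebra.Polynomial" "HOL-Computational_Algebra.Squarefree"
begin

definition number_field :: "complex set \<Rightarrow> bool" where
  "number_field K \<longleftrightarrow> 0 \<in> K \<and> 1 \<in> K \<and>
     (\<forall>x\<in>K. \<forall>y\<in>K. x + y \<in> K \<and> x * y \<in> K) \<and>
     (\<forall>x\<in>K. - x \<in> K \<and> inverse x \<in> K) \<and>
     (\<exists>bs :: complex list. set bs \<subseteq> K \<and>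
        (\<forall>x\<in>K. \<exists>q :: nat \<Rightarrow> rat. x = (\<Sum>i<length bs. of_rat (q i) * bs ! i)))"

definition embeddings :: "complex set \<Rightarrow> (complex \<Rightarrow> complex) set" where
  "embeddings K = {\<sigma>. \<sigma> 1 = 1 \<and> (\<forall>x\<in>K. \<forall>y\<in>K. \<sigma> (x + y) = \<sigma> x + \<sigma> y \<and> \<sigma> (x * y) = \<sigma> x * \<sigma> y)
                      \<and> (\<forall>x. x \<notin> K \<longrightarrow> \<sigma> x = 0)}"

definition totally_real :: "complex set \<Rightarrow> bool" where
  "totally_real K \<longleftrightarrow> (\<forall>\<sigma>\<in>embeddings K. \<forall>x\<in>K. \<sigma> x \<in> \<real>)"

definition totally_positive :: "complex set \<Rightarrow> complex \<Rightarrow> bool" where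
  "totally_positive K \<alpha> \<longleftrightarrow> \<alpha> \<in> K \<and> (\<forall>\<sigma>\<in>embeddings K. \<sigma> \<alpha> \<in> \<real> \<and> Re (\<sigma> \<alpha>) > 0)"

definition ring_of_integers :: "complex set \<Rightarrow> complex set" where
  "ring_of_integers K = {x \<in> K. \<exists>p :: int poly. lead_coeff p = 1 \<and> poly (map_poly of_int p) x = 0}"

section \<open>Quaternion algebras (a,b / F) with basis 1, i, j, ij\<close>

record 'f quat =
  q0 :: 'f
  q1 :: 'f
  q2 :: 'f
  q3 :: 'f

definition qmk :: "'f \<Rightarrow> 'f \<Rightarrow> 'f \<Rightarrow> 'f \<Rightarrow> 'f quat" where
  "qmk x0 x1 x2 x3 = \<lparr>q0 = x0, q1 = x1, q2 = x2, q3 = x3\<rparr>"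

definition qzero :: "'f::zero quat" where "qzero = qmk 0 0 0 0"
definition qone :: "'f::{zero,one} quat" where "qone = qmk 1 0 0 0"
definition qof :: "'f::zero \<Rightarrow> 'f quat" where "qof c = qmk c 0 0 0"

definition qadd :: "'f::plus quat \<Rightarrow> 'f quat \<Rightarrow> 'f quat" where
  "qadd x y = qmk (q0 x + q0 y) (q1 x + q1 y) (q2 x + q2 y) (q3 x + q3 y)"

definition qscal :: "'f::times \<Rightarrow> 'f quat \<Rightarrow> 'f quat" where
  "qscal c x = qmk (c * q0 x) (c * q1 x) (c * q2 x) (c * q3 x)"

definition qconj :: "'f::uminus quat \<Rightarrow> 'f quat" where
  "qconj x = qmk (q0 x) (- q1 x) (- q2 x) (- q3 x)"

text \<open>Multiplication in (a,b / F): i^2 = a, j^2 = b, ij = -ji.\<close>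
definition qmul :: "'f::comm_ring \<Rightarrow> 'f \<Rightarrow> 'f quat \<Rightarrow> 'f quat \<Rightarrow> 'f quat" where
  "qmul a b x y = qmk
     (q0 x * q0 y + a * q1 x * q1 y + b * q2 x * q2 y - a * b * q3 x * q3 y)
     (q0 x * q1 y + q1 x * q0 y - b * q2 x * q3 y + b * q3 x * q2 y)
     (q0 x * q2 y + q2 x * q0 y + a * q1 x * q3 y - a * q3 x * q1 y)
     (q0 x * q3 y + q3 x * q0 y + q1 x * q2 y - q2 x * q1 y)"

text \<open>Reduced trace tr(x) = x + conj x (an element of the centre, read off its 1-coordinate).\<close>
definition qtr :: "'f::{plus,uminus} quat \<Rightarrow> 'f" where
  "qtr x = q0 (qadd x (qconj x))"

definition qlin :: "(nat \<Rightarrow> 'f::comm_ring) \<Rightarrow> 'f quat list \<Rightarrow> 'f quat" where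
  "qlin c gs = qmk (\<Sum>i<length gs. c i * q0 (gs ! i)) (\<Sum>i<length gs. c i * q1 (gs ! i))
                   (\<Sum>i<length gs. c i * q2 (gs ! i)) (\<Sum>i<length gs. c i * q3 (gs ! i))"

definition qalg :: "complex set \<Rightarrow> complex quat set" where
  "qalg K = {x. q0 x \<in> K \<and> q1 x \<in> K \<and> q2 x \<in> K \<and> q3 x \<in> K}"

text \<open>Hamilton quaternions are (-1,-1 / R). A is totally definite iff for every
  real embedding sigma, (sigma a, sigma b / R) is isomorphic as R-algebra to them.\<close>
definition totally_definite :: "complex set \<Rightarrow> complex \<Rightarrow> complex \<Rightarrow> bool" where
  "totally_definite K a b \<longleftrightarrow> (\<forall>\<sigma>\<in>embeddings K.
     \<exists>f :: real quat \<Rightarrow> real quat. bij f \<and>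
        (\<forall>x y. f (qadd x y) = qadd (f x) (f y)) \<and>
        (\<forall>c x. f (qscal c x) = qscal c (f x)) \<and>
        (\<forall>x y. f (qmul (Re (\<sigma> a)) (Re (\<sigma> b)) x y) = qmul (-1) (-1) (f x) (f y)))"

text \<open>Ideals of A: finitely generated O_K-submodules I of A with K I = A.\<close>
definition qideal :: "complex set \<Rightarrow> complex quat set \<Rightarrow> bool" where
  "qideal K I \<longleftrightarrow> I \<subseteq> qalg K \<and>
     (\<exists>gs :: complex quat list. I = {qlin c gs | c. \<forall>i. c i \<in> ring_of_integers K}) \<and>
     qalg K = {qlin c xs | c xs. set xs \<subseteq> I \<and> (\<forall>i. c i \<in> K)}"

definition qorder :: "complex set \<Rightarrow> complex \<Rightarrow> complex \<Rightarrow> complex quat set \<Rightarrow> bool" where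
  "qorder K a b \<Lambda> \<longleftrightarrow> qideal K \<Lambda> \<and> qone \<in> \<Lambda> \<and>
     (\<forall>x\<in>\<Lambda>. \<forall>y\<in>\<Lambda>. qadd x y \<in> \<Lambda> \<and> qmul a b x y \<in> \<Lambda>)"

definition maximal_order :: "complex set \<Rightarrow> complex \<Rightarrow> complex \<Rightarrow> complex quat set \<Rightarrow> bool" where
  "maximal_order K a b \<Lambda> \<longleftrightarrow> qorder K a b \<Lambda> \<and>
     (\<forall>\<Gamma>. qorder K a b \<Gamma> \<and> \<Lambda> \<subseteq> \<Gamma> \<longrightarrow> \<Gamma> = \<Lambda>)"

definition left_order :: "complex set \<Rightarrow> complex \<Rightarrow> complex \<Rightarrow> complex quat set \<Rightarrow> complex quat set" where
  "left_order K a b J = {x \<in> qalg K. \<forall>y\<in>J. qmul a b x y \<in> J}"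

definition right_order :: "complex set \<Rightarrow> complex \<Rightarrow> complex \<Rightarrow> complex quat set \<Rightarrow> complex quat set" where
  "right_order K a b J = {x \<in> qalg K. \<forall>y\<in>J. qmul a b y x \<in> J}"

definition LR :: "complex set \<Rightarrow> complex \<Rightarrow> complex \<Rightarrow> complex quat set \<Rightarrow> complex quat set set" where
  "LR K a b \<Lambda> = {J. qideal K J \<and> left_order K a b J = \<Lambda> \<and> right_order K a b J = \<Lambda>}"

definition qunit :: "complex set \<Rightarrow> complex \<Rightarrow> complex \<Rightarrow> complex quat \<Rightarrow> bool" where
  "qunit K a b x \<longleftrightarrow> x \<in> qalg K \<and> (\<exists>y\<in>qalg K. qmul a b x y = qone \<and> qmul a b y x = qone)"

definition qinverse :: "complex set \<Rightarrow> complex \<Rightarrow> complex \<Rightarrow> complex quat \<Rightarrow> complex quat" where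
  "qinverse K a b x = (SOME y. y \<in> qalg K \<and> qmul a b x y = qone \<and> qmul a b y x = qone)"

definition normalizer :: "complex set \<Rightarrow> complex \<Rightarrow> complex \<Rightarrow> complex quat set \<Rightarrow> complex quat set" where
  "normalizer K a b \<Lambda> = {x. qunit K a b x \<and>
      (\<lambda>l. qmul a b (qmul a b x l) (qinverse K a b x)) ` \<Lambda> = \<Lambda>}"

section \<open>A \<otimes>_Q R = product over the embeddings sigma of A \<otimes>_{K,sigma} R\<close>

definition AR :: "complex set \<Rightarrow> ((complex \<Rightarrow> complex) \<Rightarrow> real quat) set" where
  "AR K = {X. \<forall>\<sigma>. \<sigma> \<notin> embeddings K \<longrightarrow> X \<sigma> = qzero}"

definition iota :: "complex set \<Rightarrow> complex quat \<Rightarrow> (complex \<Rightarrow> complex) \<Rightarrow> real quat" where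
  "iota K x = (\<lambda>\<sigma>. if \<sigma> \<in> embeddings K
       then qmk (Re (\<sigma> (q0 x))) (Re (\<sigma> (q1 x))) (Re (\<sigma> (q2 x))) (Re (\<sigma> (q3 x))) else qzero)"

definition armul :: "complex set \<Rightarrow> complex \<Rightarrow> complex \<Rightarrow> ((complex \<Rightarrow> complex) \<Rightarrow> real quat)
    \<Rightarrow> ((complex \<Rightarrow> complex) \<Rightarrow> real quat) \<Rightarrow> (complex \<Rightarrow> complex) \<Rightarrow> real quat" where
  "armul K a b X Y = (\<lambda>\<sigma>. if \<sigma> \<in> embeddings K
       then qmul (Re (\<sigma> a)) (Re (\<sigma> b)) (X \<sigma>) (Y \<sigma>) else qzero)"

text \<open>q_alpha(x,y) = Tr_{K/Q}(tr_{A/K}(alpha x conj y)), Tr_{K/Q} = sum over embeddings,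
  extended R-bilinearly to A \<otimes>_Q R.\<close>
definition qform :: "complex set \<Rightarrow> complex \<Rightarrow> complex \<Rightarrow> complex \<Rightarrow>
    ((complex \<Rightarrow> complex) \<Rightarrow> real quat) \<Rightarrow> ((complex \<Rightarrow> complex) \<Rightarrow> real quat) \<Rightarrow> real" where
  "qform K a b \<alpha> X Y = (\<Sum>\<sigma>\<in>embeddings K.
      qtr (qmul (Re (\<sigma> a)) (Re (\<sigma> b)) (qscal (Re (\<sigma> \<alpha>)) (X \<sigma>)) (qconj (Y \<sigma>))))"

definition ldual :: "complex set \<Rightarrow> complex \<Rightarrow> complex \<Rightarrow> complex \<Rightarrow> complex quat set
    \<Rightarrow> ((complex \<Rightarrow> complex) \<Rightarrow> real quat) set" where
  "ldual K a b \<alpha> I = {X \<in> AR K. \<forall>y\<in>I. qform K a b \<alpha> X (iota K y) \<in> \<int>}"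

definition ideal_lattice :: "complex set \<Rightarrow> complex \<Rightarrow> complex \<Rightarrow> complex quat set \<Rightarrow> complex \<Rightarrow> complex quat set \<Rightarrow> bool" where
  "ideal_lattice K a b \<Lambda> \<alpha> I \<longleftrightarrow> totally_positive K \<alpha> \<and>
     (\<exists>J t. J \<in> LR K a b \<Lambda> \<and> qunit K a b t \<and> I = (\<lambda>x. qmul a b x t) ` J)"

definition arakelov_modular :: "complex set \<Rightarrow> complex \<Rightarrow> complex \<Rightarrow> complex quat set \<Rightarrow> complex \<Rightarrow> complex quat set \<Rightarrow> nat \<Rightarrow> bool" where
  "arakelov_modular K a b \<Lambda> \<alpha> I m \<longleftrightarrow> 0 < m \<and> totally_positive K \<alpha> \<and>
     (\<exists>J t \<beta>. J \<in> LR K a b \<Lambda> \<and> qunit K a b t \<and> I = (\<lambda>x. qmul a b x t) ` J \<and>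
        \<beta> \<in> normalizer K a b \<Lambda> \<inter> \<Lambda> \<and> qof (of_nat m) = qmul a b \<beta> (qconj \<beta>) \<and>
        iota K ` I = (\<lambda>X. armul K a b X (iota K (qmul a b (qmul a b (qconj t) \<beta>)
                                          (qinverse K a b (qconj t))))) ` ldual K a b \<alpha> I)"

end

theory Submission
  imports Defs
begin

text \<open>Multiplying the witness \<open>\<beta>\<close> by \<open>\<ell>\<^sub>1\<close> and the form \<open>q\<^sub>\<alpha>\<close> by \<open>\<ell>\<^sub>1\<close> keeps the
  lattice \<open>I\<close>: \<open>\<ell>\<^sub>1\<beta>\<close> still lies in \<open>\<Lambda>\<close> and normalises it, its reduced norm is
  \<open>\<ell>\<^sub>1\<^sup>2\<ell>\<^sub>2\<close>, and passing from \<open>q\<^sub>\<alpha>\<close> to \<open>q\<^bsub>\<ell>\<^sub>1\<alpha>\<^esub>\<close> shrinks the dual lattice by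
  \<open>\<ell>\<^sub>1\<close>, which exactly compensates the extra factor \<open>\<ell>\<^sub>1\<close> in the twisted witness
  \<open>t\<^sup>* \<beta> (t\<^sup>*)\<^sup>-\<^sup>1\<close>, \<open>t\<^sup>*\<close> the conjugate of \<open>t\<close>.\<close>

lemma qmul_assoc: "qmul a b (qmul a b x y) z = qmul a b x (qmul a b (y::'f::comm_ring quat) z)"
  by (simp add: qmul_def qmk_def algebra_simps)

lemma qmul_qone_left [simp]: "qmul a b qone x = (x::'f::comm_ring_1 quat)"
  by (simp add: qmul_def qmk_def qone_def)

lemma qmul_qone_right [simp]: "qmul a b x qone = (x::'f::comm_ring_1 quat)"
  by (simp add: qmul_def qmk_def qone_def)

lemma qmul_qscal_left [simp]: "qmul a b (qscal c x) y = qscal c (qmul a b x (y::'f::comm_ring quat))"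
  by (simp add: qmul_def qmk_def qscal_def algebra_simps)

lemma qmul_qscal_right [simp]: "qmul a b x (qscal c y) = qscal c (qmul a b x (y::'f::comm_ring quat))"
  by (simp add: qmul_def qmk_def qscal_def algebra_simps)

lemma qconj_qscal [simp]: "qconj (qscal c x) = qscal c (qconj (x::'f::comm_ring quat))"
  by (simp add: qconj_def qmk_def qscal_def)

lemma qscal_qscal [simp]: "qscal c (qscal d x) = qscal (c * d) (x::'f::comm_ring quat)"
  by (simp add: qmk_def qscal_def algebra_simps)

lemma qscal_one [simp]: "qscal 1 x = (x::'f::comm_ring_1 quat)"
  by (simp add: qmk_def qscal_def)

lemma qscal_qzero [simp]: "qscal c qzero = (qzero::'f::comm_ring quat)"
  by (simp add: qzero_def qscal_def qmk_def)

lemma qscal_qof: "qscal c (qof x) = qof (c * (x::'f::comm_ring))"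
  by (simp add: qof_def qscal_def qmk_def)

lemma qscal_mem_qalg: "c \<in> K \<Longrightarrow> x \<in> qalg K \<Longrightarrow> number_field K \<Longrightarrow> qscal c x \<in> qalg K"
  by (simp add: qalg_def qscal_def qmk_def number_field_def)

lemma number_field_of_nat: "number_field K \<Longrightarrow> of_nat n \<in> K"
  by (induction n) (auto simp: number_field_def)

lemma embedding_zero:
  assumes "\<sigma> \<in> embeddings K" "number_field K"
  shows "\<sigma> 0 = 0"
proof -
  have "\<sigma> (0 + 0) = \<sigma> 0 + \<sigma> 0"
    using assms unfolding embeddings_def number_field_def by blast
  then show ?thesis by simp
qed

lemma embedding_of_nat:
  assumes "\<sigma> \<in> embeddings K" "number_field K"
  shows "\<sigma> (of_nat n) = of_nat n"
proof (induction n)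
  case (Suc n)
  have "\<sigma> (1 + of_nat n) = \<sigma> 1 + \<sigma> (of_nat n)"
    using assms number_field_of_nat[OF assms(2)] by (simp add: embeddings_def number_field_def)
  with Suc assms(1) show ?case by (simp add: embeddings_def add.commute)
qed (simp add: embedding_zero[OF assms])

lemma embedding_of_nat_mult:
  assumes "\<sigma> \<in> embeddings K" "number_field K"
  shows "\<sigma> (of_nat n * x) = of_nat n * \<sigma> x"
proof (cases "x \<in> K \<or> n = 0")
  case True
  then show ?thesis
    using assms number_field_of_nat[OF assms(2)] embedding_of_nat[OF assms] embedding_zero[OF assms]
    by (auto simp: embeddings_def)
next
  case False
  have "of_nat n * x \<notin> K"
  proof
    assume "of_nat n * x \<in> K"
    then have "inverse (of_nat n) * (of_nat n * x) \<in> K"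
      using assms(2) number_field_of_nat[OF assms(2)] by (simp add: number_field_def)
    with False show False by (simp add: field_simps)
  qed
  with False assms(1) show ?thesis by (simp add: embeddings_def)
qed

lemma totally_positive_of_nat_mult:
  assumes "totally_positive K \<alpha>" "number_field K" "0 < n"
  shows "totally_positive K (of_nat n * \<alpha>)"
  using assms number_field_of_nat[OF assms(2), of n]
  by (auto simp: totally_positive_def embedding_of_nat_mult number_field_def)

lemma qorder_of_nat_qscal_mem:
  assumes "qorder K a b \<Lambda>" "x \<in> \<Lambda>" "0 < n"
  shows "qscal (of_nat n) x \<in> \<Lambda>"
proof -
  have "qscal (of_nat (Suc m)) x \<in> \<Lambda>" for m
  proof (induction m)
    case (Suc m)
    have "qscal (of_nat (Suc (Suc m))) x = qadd (qscal (of_nat (Suc m)) x) x"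
      by (simp add: qscal_def qadd_def qmk_def algebra_simps)
    with Suc assms(1,2) show ?case by (simp add: qorder_def)
  qed (simp add: assms(2))
  with assms(3) show ?thesis by (metis Suc_pred)
qed

lemma qinverse_eqI:
  assumes "y \<in> qalg K" "qmul a b x y = qone" "qmul a b y x = qone"
  shows "qinverse K a b x = y"
proof -
  have "\<exists>z. z \<in> qalg K \<and> qmul a b x z = qone \<and> qmul a b z x = qone"
    using assms by blast
  then have z: "qmul a b x (qinverse K a b x) = qone"
    unfolding qinverse_def by (metis (mono_tags, lifting) someI_ex)
  have "y = qmul a b (qmul a b y x) (qinverse K a b x)"
    by (simp add: qmul_assoc z)
  then show ?thesis by (simp add: assms(3))
qed

lemma qinverse_mem:
  assumes "qunit K a b x"
  shows "qinverse K a b x \<in> qalg K \<and> qmul a b x (qinverse K a b x) = qone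
    \<and> qmul a b (qinverse K a b x) x = qone"
  using assms unfolding qinverse_def qunit_def by (metis (mono_tags, lifting) someI_ex)

lemma qunit_qscal:
  assumes "qunit K a b x" "number_field K" "c \<in> K" "c \<noteq> 0"
  shows "qunit K a b (qscal c x)"
    and "qinverse K a b (qscal c x) = qscal (inverse c) (qinverse K a b x)"
proof -
  have "inverse c \<in> K" using assms(2,3) by (simp add: number_field_def)
  then have inv: "qscal (inverse c) (qinverse K a b x) \<in> qalg K"
    using qinverse_mem[OF assms(1)] assms(2) by (simp add: qscal_mem_qalg)
  have "qscal c x \<in> qalg K" using assms by (simp add: qunit_def qscal_mem_qalg)
  with inv show "qunit K a b (qscal c x)"
    using qinverse_mem[OF assms(1)] assms(4) unfolding qunit_def
    by (metis qmul_qscal_left qmul_qscal_right qscal_qscal qscal_one right_inverse)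
  show "qinverse K a b (qscal c x) = qscal (inverse c) (qinverse K a b x)"
    using qinverse_mem[OF assms(1)] assms(4) by (intro qinverse_eqI[OF inv]) simp_all
qed

lemma normalizer_qscal:
  assumes "x \<in> normalizer K a b \<Lambda>" "number_field K" "c \<in> K" "c \<noteq> 0"
  shows "qscal c x \<in> normalizer K a b \<Lambda>"
proof -
  have u: "qunit K a b x" using assms(1) by (simp add: normalizer_def)
  have "(\<lambda>l. qmul a b (qmul a b (qscal c x) l) (qinverse K a b (qscal c x)))
      = (\<lambda>l. qmul a b (qmul a b x l) (qinverse K a b x))"
    using assms(4) by (simp add: qunit_qscal(2)[OF u assms(2-4)])
  with assms(1) qunit_qscal(1)[OF u assms(2-4)] show ?thesis
    unfolding normalizer_def by (simp only: mem_Collect_eq)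
qed

definition ar_scale :: "real \<Rightarrow> ((complex \<Rightarrow> complex) \<Rightarrow> real quat) \<Rightarrow> (complex \<Rightarrow> complex) \<Rightarrow> real quat" where
  "ar_scale r X = (\<lambda>\<sigma>. qscal r (X \<sigma>))"

lemma ar_scale_ar_scale [simp]: "ar_scale r (ar_scale s X) = ar_scale (r * s) X"
  by (simp add: ar_scale_def)

lemma ar_scale_one [simp]: "ar_scale 1 X = X"
  by (simp add: ar_scale_def)

lemma ar_scale_mem_AR_iff: "r \<noteq> 0 \<Longrightarrow> ar_scale r X \<in> AR K \<longleftrightarrow> X \<in> AR K"
  by (auto simp: AR_def ar_scale_def) (metis qscal_qscal qscal_one qscal_qzero left_inverse)

lemma iota_of_nat_qscal:
  "number_field K \<Longrightarrow> iota K (qscal (of_nat n) x) = ar_scale (real n) (iota K x)"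
  by (rule ext) (simp add: iota_def ar_scale_def qscal_def qmk_def qzero_def embedding_of_nat_mult)

lemma armul_ar_scale: "armul K a b X (ar_scale r Y) = armul K a b (ar_scale r X) Y"
  by (simp add: armul_def ar_scale_def cong: if_cong)

lemma qform_of_nat_mult:
  assumes "number_field K"
  shows "qform K a b (of_nat n * \<alpha>) X Y = qform K a b \<alpha> (ar_scale (real n) X) Y"
proof -
  have "Re (\<sigma> (of_nat n * \<alpha>)) = Re (\<sigma> \<alpha>) * real n" if "\<sigma> \<in> embeddings K" for \<sigma>
    using embedding_of_nat_mult[OF that assms] by simp
  then show ?thesis
    unfolding qform_def ar_scale_def by (intro sum.cong) simp_all
qed

lemma ldual_of_nat_mult:
  assumes "number_field K" "0 < n"
  shows "ar_scale (real n) ` ldual K a b (of_nat n * \<alpha>) I = ldual K a b \<alpha> I"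
proof -
  have mem: "X \<in> ldual K a b (of_nat n * \<alpha>) I \<longleftrightarrow> ar_scale (real n) X \<in> ldual K a b \<alpha> I" for X
    using assms by (simp add: ldual_def qform_of_nat_mult ar_scale_mem_AR_iff)
  show ?thesis
  proof (intro set_eqI iffI)
    fix Y assume "Y \<in> ldual K a b \<alpha> I"
    moreover have "Y = ar_scale (real n) (ar_scale (inverse (real n)) Y)"
      using assms(2) by simp
    ultimately show "Y \<in> ar_scale (real n) ` ldual K a b (of_nat n * \<alpha>) I"
      using mem by (metis image_eqI)
  qed (auto simp: mem)
qed

lemma arakelov_modular_scale:
  assumes am: "arakelov_modular K a b \<Lambda> \<alpha> I m"
    and nf: "number_field K" and ord: "qorder K a b \<Lambda>" and n: "0 < n"
  shows "arakelov_modular K a b \<Lambda> (of_nat n * \<alpha>) I (n\<^sup>2 * m)"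
proof -
  obtain J t \<beta> where m: "0 < m" and tp: "totally_positive K \<alpha>" and J: "J \<in> LR K a b \<Lambda>"
    and t: "qunit K a b t" and IJ: "I = (\<lambda>x. qmul a b x t) ` J"
    and \<beta>N: "\<beta> \<in> normalizer K a b \<Lambda>" and \<beta>\<Lambda>: "\<beta> \<in> \<Lambda>"
    and \<beta>norm: "qof (of_nat m) = qmul a b \<beta> (qconj \<beta>)"
    and dual: "iota K ` I = (\<lambda>X. armul K a b X (iota K (qmul a b (qmul a b (qconj t) \<beta>)
                                          (qinverse K a b (qconj t))))) ` ldual K a b \<alpha> I"
    using am unfolding arakelov_modular_def by blast
  define \<beta>' where "\<beta>' = qscal (of_nat n) \<beta>"
  have "of_nat n \<in> K" "(of_nat n :: complex) \<noteq> 0"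
    using number_field_of_nat[OF nf] n by auto
  then have \<beta>'N: "\<beta>' \<in> normalizer K a b \<Lambda>"
    unfolding \<beta>'_def using normalizer_qscal[OF \<beta>N nf] by blast
  have \<beta>'\<Lambda>: "\<beta>' \<in> \<Lambda>"
    unfolding \<beta>'_def using qorder_of_nat_qscal_mem[OF ord \<beta>\<Lambda> n] .
  have \<beta>'norm: "qof (of_nat (n\<^sup>2 * m)) = qmul a b \<beta>' (qconj \<beta>')"
    by (simp add: \<beta>'_def \<beta>norm[symmetric] qscal_qof power2_eq_square mult.assoc)
  define \<gamma> where "\<gamma> = qmul a b (qmul a b (qconj t) \<beta>) (qinverse K a b (qconj t))"
  have \<gamma>': "qmul a b (qmul a b (qconj t) \<beta>') (qinverse K a b (qconj t)) = qscal (of_nat n) \<gamma>"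
    by (simp add: \<beta>'_def \<gamma>_def)
  have "(\<lambda>X. armul K a b X (iota K (qscal (of_nat n) \<gamma>))) ` ldual K a b (of_nat n * \<alpha>) I
      = (\<lambda>X. armul K a b X (iota K \<gamma>)) ` ar_scale (real n) ` ldual K a b (of_nat n * \<alpha>) I"
    unfolding image_image iota_of_nat_qscal[OF nf] armul_ar_scale ..
  then have dual': "iota K ` I = (\<lambda>X. armul K a b X (iota K (qmul a b (qmul a b (qconj t) \<beta>')
                                          (qinverse K a b (qconj t))))) ` ldual K a b (of_nat n * \<alpha>) I"
    unfolding \<gamma>' ldual_of_nat_mult[OF nf n] dual \<gamma>_def by simp
  have "0 < n\<^sup>2 * m" using m n by simp
  with totally_positive_of_nat_mult[OF tp nf n] J t IJ \<beta>'N \<beta>'\<Lambda> \<beta>'norm dual' show ?thesis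
    unfolding arakelov_modular_def by blast
qed

theorem mainTheorem10:
  fixes K :: "complex set" and a b :: complex and \<Lambda> :: "complex quat set"
    and l1 l2 :: nat
  assumes "number_field K" and "totally_real K"
    and "a \<in> K" and "b \<in> K" and "a \<noteq> 0" and "b \<noteq> 0"
    and "totally_definite K a b"
    and "maximal_order K a b \<Lambda>"
    and "0 < l1" and "0 < l2" and "squarefree l2"
    and "\<exists>I \<alpha>. arakelov_modular K a b \<Lambda> \<alpha> I l2"
  shows "\<exists>I \<alpha>. arakelov_modular K a b \<Lambda> \<alpha> I (l1\<^sup>2 * l2)"
proof -
  obtain I \<alpha> where "arakelov_modular K a b \<Lambda> \<alpha> I l2" using assms(12) by blast
  moreover have "qorder K a b \<Lambda>" using assms(8) by (simp add: maximal_order_def)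
  ultimately have "arakelov_modular K a b \<Lambda> (of_nat l1 * \<alpha>) I (l1\<^sup>2 * l2)"
    using arakelov_modular_scale assms(1,9) by blast
  then show ?thesis by blast
qed

end
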